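(* Let $G=(V,E)$ be a finite connected simple graph and $i\in V$. For $u,v\in V\setminus\{i\}$ write $u\sim_i v$ if there is a graph automorphism $\pi$ of $G$ with $\pi(i)=i$ and $\pi(u)=v$; this is an equivalence relation, and together with the singleton $\{i\}$ its classes partition $V$. Form the weighted graph $G_i$ whose vertices are these classes, with $\phi_i:V\to V(G_i)$ mapping each vertex to its class, vertex weights $w_V(x)=|\phi_i^{-1}(x)|$, and edge weights $w_E(x,y)=$ the number of edges of $G$ with one endpoint in $\phi_i^{-1}(x)$ and the other in $\phi_i^{-1}(y)$ (with $xy$ an edge of $G_i$ when this number is positive). Suppose that no $\sim_i$-equivalence class contains an edge of $G$. Let $\widehat f_i$ be any solution of the weighted problem on $G_i$ with special vertex $\phi_i(i)$, i.e. a function $g:V(G_i)\to\mathbb{R}$ minimizing $\sum_{xy\in E(G_i)} w_E(x,y)(g(x)-g(y))^2$ subject to $\sum_{x} w_V(x)g(x)^2=1$ and $g(\phi_i(i))=0$. Then the function $f_i:V\to\mathbb{R}$, $f_i(j)=\widehat f_i(\phi_i(j))$, is a solution of the problem $$\min_{g:V\to\mathbb{R},\ \|g\|_2=1,\ g(i)=0}\ \sum_{jk\in E}(g(k)-g(j))^2$$ on $G$.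
   Context: A graph automorphism is a bijection $\pi:V\to V$ with $xy\in E$ iff $\pi(x)\pi(y)\in E$. In the objective, each edge is counted once. *)

theory Defs
  imports Complex_Main
begin

definition simple_graph :: "'a set \<Rightarrow> ('a \<Rightarrow> 'a \<Rightarrow> bool) \<Rightarrow> bool" where
  "simple_graph V E \<longleftrightarrow> finite V \<and> (\<forall>a b. E a b \<longrightarrow> a \<in> V \<and> b \<in> V)
     \<and> (\<forall>a b. E a b \<longrightarrow> E b a) \<and> (\<forall>a. \<not> E a a)"

definition connected_graph :: "'a set \<Rightarrow> ('a \<Rightarrow> 'a \<Rightarrow> bool) \<Rightarrow> bool" where
  "connected_graph V E \<longleftrightarrow> (\<forall>u\<in>V. \<forall>v\<in>V. E\<^sup>*\<^sup>* u v)"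

definition graph_automorphism :: "'a set \<Rightarrow> ('a \<Rightarrow> 'a \<Rightarrow> bool) \<Rightarrow> ('a \<Rightarrow> 'a) \<Rightarrow> bool" where
  "graph_automorphism V E \<pi> \<longleftrightarrow> bij_betw \<pi> V V
     \<and> (\<forall>x\<in>V. \<forall>y\<in>V. E x y \<longleftrightarrow> E (\<pi> x) (\<pi> y))"

definition orbit_rel :: "'a set \<Rightarrow> ('a \<Rightarrow> 'a \<Rightarrow> bool) \<Rightarrow> 'a \<Rightarrow> 'a \<Rightarrow> 'a \<Rightarrow> bool" where
  "orbit_rel V E i u v \<longleftrightarrow> u \<in> V - {i} \<and> v \<in> V - {i}
     \<and> (\<exists>\<pi>. graph_automorphism V E \<pi> \<and> \<pi> i = i \<and> \<pi> u = v)"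

definition phi :: "'a set \<Rightarrow> ('a \<Rightarrow> 'a \<Rightarrow> bool) \<Rightarrow> 'a \<Rightarrow> 'a \<Rightarrow> 'a set" where
  "phi V E i u = (if u = i then {i} else {v. orbit_rel V E i u v})"

definition quot_vertices :: "'a set \<Rightarrow> ('a \<Rightarrow> 'a \<Rightarrow> bool) \<Rightarrow> 'a \<Rightarrow> 'a set set" where
  "quot_vertices V E i = phi V E i ` V"

definition vweight :: "'a set \<Rightarrow> ('a \<Rightarrow> 'a \<Rightarrow> bool) \<Rightarrow> 'a \<Rightarrow> 'a set \<Rightarrow> nat" where
  "vweight V E i x = card {u \<in> V. phi V E i u = x}"

definition eweight :: "'a set \<Rightarrow> ('a \<Rightarrow> 'a \<Rightarrow> bool) \<Rightarrow> 'a \<Rightarrow> 'a set \<Rightarrow> 'a set \<Rightarrow> nat" where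
  "eweight V E i x y = card {{a, b} | a b. a \<in> V \<and> b \<in> V \<and> E a b
       \<and> phi V E i a = x \<and> phi V E i b = y}"

definition quot_edges :: "'a set \<Rightarrow> ('a \<Rightarrow> 'a \<Rightarrow> bool) \<Rightarrow> 'a \<Rightarrow> ('a set \<times> 'a set) set" where
  "quot_edges V E i = {(x, y). x \<in> quot_vertices V E i \<and> y \<in> quot_vertices V E i
       \<and> eweight V E i x y > 0}"

(* objective on G_i; each edge counted once (ordered pairs, halved) *)
definition quot_energy :: "'a set \<Rightarrow> ('a \<Rightarrow> 'a \<Rightarrow> bool) \<Rightarrow> 'a \<Rightarrow> ('a set \<Rightarrow> real) \<Rightarrow> real" where
  "quot_energy V E i g = (1/2) * (\<Sum>(x, y)\<in>quot_edges V E i.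
       real (eweight V E i x y) * (g x - g y)^2)"

definition quot_feasible :: "'a set \<Rightarrow> ('a \<Rightarrow> 'a \<Rightarrow> bool) \<Rightarrow> 'a \<Rightarrow> ('a set \<Rightarrow> real) \<Rightarrow> bool" where
  "quot_feasible V E i g \<longleftrightarrow>
     (\<Sum>x\<in>quot_vertices V E i. real (vweight V E i x) * (g x)^2) = 1
     \<and> g (phi V E i i) = 0"

definition quot_solution :: "'a set \<Rightarrow> ('a \<Rightarrow> 'a \<Rightarrow> bool) \<Rightarrow> 'a \<Rightarrow> ('a set \<Rightarrow> real) \<Rightarrow> bool" where
  "quot_solution V E i g \<longleftrightarrow> quot_feasible V E i g
     \<and> (\<forall>h. quot_feasible V E i h \<longrightarrow> quot_energy V E i g \<le> quot_energy V E i h)"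

(* objective on G: sum over edges jk of (g k - g j)^2, each edge counted once *)
definition energy :: "'a set \<Rightarrow> ('a \<Rightarrow> 'a \<Rightarrow> bool) \<Rightarrow> ('a \<Rightarrow> real) \<Rightarrow> real" where
  "energy V E g = (1/2) * (\<Sum>(j, k)\<in>{(j, k). j \<in> V \<and> k \<in> V \<and> E j k}. (g k - g j)^2)"

definition feasible :: "'a set \<Rightarrow> 'a \<Rightarrow> ('a \<Rightarrow> real) \<Rightarrow> bool" where
  "feasible V i g \<longleftrightarrow> (\<Sum>j\<in>V. (g j)^2) = 1 \<and> g i = 0"

definition solution :: "'a set \<Rightarrow> ('a \<Rightarrow> 'a \<Rightarrow> bool) \<Rightarrow> 'a \<Rightarrow> ('a \<Rightarrow> real) \<Rightarrow> bool" where
  "solution V E i g \<longleftrightarrow> feasible V i g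
     \<and> (\<forall>h. feasible V i h \<longrightarrow> energy V E g \<le> energy V E h)"

end

theory Submission
  imports Defs "HOL-Analysis.L2_Norm" "HOL-Combinatorics.Permutations"
begin

text \<open>
  Let \<open>\<Gamma>\<close> be the group of automorphisms fixing \<open>i\<close>. A competitor \<open>h\<close> on \<open>G\<close> is replaced by
  its root mean square over \<open>\<Gamma>\<close>, \<open>s j = (|\<Gamma>|\<inverse> \<Sum>\<^sub>\<gamma> h(\<gamma> j)\<^sup>2)\<^sup>1\<^sup>/\<^sup>2\<close>. It still has norm 1 and
  vanishes at \<open>i\<close>, it is constant on the classes of \<open>\<sim>\<^sub>i\<close>, and its energy is at most that
  of \<open>h\<close>: edge by edge this is Minkowski's inequality in \<open>\<ell>\<^sup>2(\<Gamma>)\<close>, and each \<open>\<gamma>\<close> permutes the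
  edges. Functions constant on the classes are exactly the lifts of functions on \<open>G\<^sub>i\<close>, and
  lifting preserves both the constraint and the energy (edges inside a class contribute
  nothing on either side), so the lift of \<open>f\<^sub>i\<close> beats \<open>s\<close> and hence \<open>h\<close>.
\<close>

lemma sum_comp_eq_sum_card_fibres:
  fixes F :: "'b \<Rightarrow> 'c::semiring_1"
  assumes "finite A"
  shows "(\<Sum>a\<in>A. F (f a)) = (\<Sum>y\<in>f ` A. of_nat (card {a\<in>A. f a = y}) * F y)"
proof -
  have fibre: "(\<Sum>a\<in>{a\<in>A. f a = y}. F (f a)) = (\<Sum>a\<in>{a\<in>A. f a = y}. F y)" for y
    by (rule sum.cong) auto
  have "(\<Sum>a\<in>A. F (f a)) = (\<Sum>y\<in>f ` A. \<Sum>a\<in>{a\<in>A. f a = y}. F (f a))"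
    by (rule sum.image_gen[OF assms])
  then show ?thesis
    by (simp only: fibre sum_constant)
qed

lemma L2_set_diff_sq_le:
  "(L2_set f A - L2_set g A)\<^sup>2 \<le> (\<Sum>x\<in>A. (f x - g x)\<^sup>2)"
proof -
  have "L2_set f A \<le> L2_set (\<lambda>x. f x - g x) A + L2_set g A"
    using L2_set_triangle_ineq[of "\<lambda>x. f x - g x" g A] by simp
  moreover have "L2_set g A \<le> L2_set (\<lambda>x. f x - g x) A + L2_set f A"
    using L2_set_triangle_ineq[of "\<lambda>x. g x - f x" f A]
    by (simp add: L2_set_def power2_commute)
  ultimately have "\<bar>L2_set f A - L2_set g A\<bar> \<le> L2_set (\<lambda>x. f x - g x) A"
    by linarith
  then have "(L2_set f A - L2_set g A)\<^sup>2 \<le> (L2_set (\<lambda>x. f x - g x) A)\<^sup>2"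
    by (metis abs_ge_zero power2_abs power_mono)
  also have "\<dots> = (\<Sum>x\<in>A. (f x - g x)\<^sup>2)"
    by (simp add: L2_set_def sum_nonneg)
  finally show ?thesis .
qed

definition arcs :: "'a set \<Rightarrow> ('a \<Rightarrow> 'a \<Rightarrow> bool) \<Rightarrow> ('a \<times> 'a) set" where
  "arcs V E = {(j, k). j \<in> V \<and> k \<in> V \<and> E j k}"

lemma energy_eq_sum_arcs:
  "energy V E g = (1/2) * (\<Sum>(j, k)\<in>arcs V E. (g k - g j)\<^sup>2)"
  by (simp add: energy_def arcs_def)

lemma finite_arcs: "finite V \<Longrightarrow> finite (arcs V E)"
  by (rule finite_subset[of _ "V \<times> V"]) (auto simp: arcs_def)

lemma energy_cong:
  "(\<And>j. j \<in> V \<Longrightarrow> f j = g j) \<Longrightarrow> energy V E f = energy V E g"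
  unfolding energy_eq_sum_arcs by (intro arg_cong[where f = "(*) (1/2)"] sum.cong) (auto simp: arcs_def)

lemma feasible_cong:
  "i \<in> V \<Longrightarrow> (\<And>j. j \<in> V \<Longrightarrow> f j = g j) \<Longrightarrow> feasible V i f \<longleftrightarrow> feasible V i g"
  unfolding feasible_def by (metis (no_types, lifting) sum.cong)

lemma energy_automorphism_invariant:
  assumes "finite V" and "graph_automorphism V E p"
  shows "energy V E (\<lambda>j. h (p j)) = energy V E h"
proof -
  have p: "bij_betw p V V" and adj: "\<And>x y. x \<in> V \<Longrightarrow> y \<in> V \<Longrightarrow> E x y \<longleftrightarrow> E (p x) (p y)"
    using assms(2) by (auto simp: graph_automorphism_def)
  have "map_prod p p ` arcs V E \<subseteq> arcs V E"
    using adj bij_betwE[OF p] by (auto simp: arcs_def)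
  moreover have "inj_on (map_prod p p) (arcs V E)"
    using bij_betw_imp_inj_on[OF p] by (auto simp: arcs_def inj_on_def)
  ultimately have "bij_betw (map_prod p p) (arcs V E) (arcs V E)"
    by (simp add: bij_betw_def endo_inj_surj finite_arcs[OF assms(1)])
  from sum.reindex_bij_betw[OF this, of "\<lambda>(j, k). (h k - h j)\<^sup>2"]
  show ?thesis
    unfolding energy_eq_sum_arcs by (simp add: case_prod_beta)
qed

section \<open>Root mean square over a set of maps\<close>

definition orbit_rms :: "('a \<Rightarrow> 'a) set \<Rightarrow> ('a \<Rightarrow> real) \<Rightarrow> 'a \<Rightarrow> real" where
  "orbit_rms G h j = L2_set (\<lambda>p. h (p j)) G / sqrt (card G)"

lemma orbit_rms_sq:
  "(orbit_rms G h j)\<^sup>2 = (\<Sum>p\<in>G. (h (p j))\<^sup>2) / card G"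
  by (simp add: orbit_rms_def L2_set_def power_divide sum_nonneg)

lemma orbit_rms_compose_right:
  assumes "bij_betw (\<lambda>p. p \<circ> q) G G"
  shows "orbit_rms G h (q j) = orbit_rms G h j"
  using sum.reindex_bij_betw[OF assms, of "\<lambda>p. (h (p j))\<^sup>2"]
  by (simp add: orbit_rms_def L2_set_def)

lemma orbit_rms_fixpoint:
  assumes "finite G" "G \<noteq> {}" and "\<And>p. p \<in> G \<Longrightarrow> p i = i"
  shows "orbit_rms G h i = \<bar>h i\<bar>"
proof -
  have "L2_set (\<lambda>p. h (p i)) G = L2_set (\<lambda>p. h i) G"
    by (intro L2_set_cong) (simp_all add: assms(3))
  then show ?thesis
    using assms(1,2) by (simp add: orbit_rms_def L2_set_constant card_gt_0_iff)
qed

lemma sum_sq_orbit_rms: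
  assumes "finite G" "G \<noteq> {}" and "\<And>p. p \<in> G \<Longrightarrow> bij_betw p V V"
  shows "(\<Sum>j\<in>V. (orbit_rms G h j)\<^sup>2) = (\<Sum>j\<in>V. (h j)\<^sup>2)"
proof -
  have "(\<Sum>j\<in>V. (orbit_rms G h j)\<^sup>2) = (\<Sum>p\<in>G. \<Sum>j\<in>V. (h (p j))\<^sup>2) / card G"
    by (simp add: orbit_rms_sq sum_divide_distrib sum.swap[of _ G])
  also have "\<dots> = (\<Sum>p\<in>G. \<Sum>j\<in>V. (h j)\<^sup>2) / card G"
  proof -
    have "(\<Sum>j\<in>V. (h (p j))\<^sup>2) = (\<Sum>j\<in>V. (h j)\<^sup>2)" if "p \<in> G" for p
      using sum.reindex_bij_betw[OF assms(3)[OF that], of "\<lambda>j. (h j)\<^sup>2"] .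
    then show ?thesis by simp
  qed
  also have "\<dots> = (\<Sum>j\<in>V. (h j)\<^sup>2)"
    using assms(1,2) by (simp add: card_gt_0_iff)
  finally show ?thesis .
qed

lemma energy_orbit_rms_le:
  assumes "finite V" "finite G" "G \<noteq> {}" and "\<And>p. p \<in> G \<Longrightarrow> graph_automorphism V E p"
  shows "energy V E (orbit_rms G h) \<le> energy V E h"
proof -
  have n: "real (card G) > 0"
    using assms(2,3) by (simp add: card_gt_0_iff)
  have edge: "(orbit_rms G h k - orbit_rms G h j)\<^sup>2 \<le> (\<Sum>p\<in>G. (h (p k) - h (p j))\<^sup>2) / card G" for j k
  proof -
    have "(orbit_rms G h k - orbit_rms G h j)\<^sup>2
        = (L2_set (\<lambda>p. h (p k)) G - L2_set (\<lambda>p. h (p j)) G)\<^sup>2 / card G"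
      by (simp add: orbit_rms_def diff_divide_distrib[symmetric] power_divide)
    also have "\<dots> \<le> (\<Sum>p\<in>G. (h (p k) - h (p j))\<^sup>2) / card G"
      using n by (intro divide_right_mono L2_set_diff_sq_le) simp
    finally show ?thesis .
  qed
  have "(\<Sum>(j, k)\<in>arcs V E. (orbit_rms G h k - orbit_rms G h j)\<^sup>2)
      \<le> (\<Sum>(j, k)\<in>arcs V E. (\<Sum>p\<in>G. (h (p k) - h (p j))\<^sup>2) / card G)"
    by (rule sum_mono) (use edge in auto)
  also have "\<dots> = (\<Sum>p\<in>G. \<Sum>(j, k)\<in>arcs V E. (h (p k) - h (p j))\<^sup>2) / card G"
    by (simp add: sum_divide_distrib[symmetric] case_prod_beta sum.swap[of _ "arcs V E"])
  also have "\<dots> = (\<Sum>p\<in>G. 2 * energy V E (\<lambda>j. h (p j))) / card G"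
    by (simp add: energy_eq_sum_arcs)
  also have "\<dots> = 2 * energy V E h"
    using n by (simp add: energy_automorphism_invariant[OF assms(1,4)])
  finally show ?thesis
    by (simp add: energy_eq_sum_arcs)
qed

section \<open>The stabiliser of a vertex\<close>

text \<open>Automorphisms are taken as permutations of \<open>V\<close>, i.e.\ the identity outside \<open>V\<close>,
  so that the stabiliser is a finite group.\<close>

definition vertex_stabilizer :: "'a set \<Rightarrow> ('a \<Rightarrow> 'a \<Rightarrow> bool) \<Rightarrow> 'a \<Rightarrow> ('a \<Rightarrow> 'a) set" where
  "vertex_stabilizer V E i =
     {p. p permutes V \<and> (\<forall>x\<in>V. \<forall>y\<in>V. E x y \<longleftrightarrow> E (p x) (p y)) \<and> p i = i}"

lemma mem_vertex_stabilizerI: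
  assumes "p permutes V" "\<And>x y. x \<in> V \<Longrightarrow> y \<in> V \<Longrightarrow> E x y \<longleftrightarrow> E (p x) (p y)" "p i = i"
  shows "p \<in> vertex_stabilizer V E i"
  using assms unfolding vertex_stabilizer_def by blast

lemma mem_vertex_stabilizerD:
  assumes "p \<in> vertex_stabilizer V E i"
  shows "p permutes V" "\<And>x y. x \<in> V \<Longrightarrow> y \<in> V \<Longrightarrow> E x y \<longleftrightarrow> E (p x) (p y)" "p i = i"
  using assms unfolding vertex_stabilizer_def by blast+

lemma vertex_stabilizer_automorphism:
  assumes "p \<in> vertex_stabilizer V E i"
  shows "graph_automorphism V E p"
  unfolding graph_automorphism_def
  using mem_vertex_stabilizerD[OF assms] permutes_imp_bij by blast

lemma finite_vertex_stabilizer: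
  assumes "finite V"
  shows "finite (vertex_stabilizer V E i)"
  using finite_permutations[OF assms]
  by (rule finite_subset[rotated]) (blast dest: mem_vertex_stabilizerD(1))

lemma id_in_vertex_stabilizer: "id \<in> vertex_stabilizer V E i"
  by (rule mem_vertex_stabilizerI) (simp_all add: permutes_id)

lemma vertex_stabilizer_compose:
  assumes p: "p \<in> vertex_stabilizer V E i" and q: "q \<in> vertex_stabilizer V E i"
  shows "p \<circ> q \<in> vertex_stabilizer V E i"
proof (rule mem_vertex_stabilizerI)
  note q_perm = mem_vertex_stabilizerD(1)[OF q]
  show "p \<circ> q permutes V"
    by (rule permutes_compose[OF q_perm mem_vertex_stabilizerD(1)[OF p]])
  show "(p \<circ> q) i = i"
    by (simp add: mem_vertex_stabilizerD(3)[OF p] mem_vertex_stabilizerD(3)[OF q])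
  fix x y assume "x \<in> V" "y \<in> V"
  then have "E x y \<longleftrightarrow> E (q x) (q y)"
    by (rule mem_vertex_stabilizerD(2)[OF q])
  also have "\<dots> \<longleftrightarrow> E (p (q x)) (p (q y))"
    using \<open>x \<in> V\<close> \<open>y \<in> V\<close>
    by (intro mem_vertex_stabilizerD(2)[OF p]) (simp_all add: permutes_in_image[OF q_perm])
  finally show "E x y \<longleftrightarrow> E ((p \<circ> q) x) ((p \<circ> q) y)"
    by simp
qed

lemma inv_in_vertex_stabilizer:
  assumes q: "q \<in> vertex_stabilizer V E i"
  shows "inv q \<in> vertex_stabilizer V E i"
proof (rule mem_vertex_stabilizerI)
  note q_perm = mem_vertex_stabilizerD(1)[OF q]
  show "inv q permutes V"
    by (rule permutes_inv[OF q_perm])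
  show "inv q i = i"
    by (simp add: permutes_inv_eq[OF q_perm] mem_vertex_stabilizerD(3)[OF q])
  fix x y assume "x \<in> V" "y \<in> V"
  then have "E (inv q x) (inv q y) \<longleftrightarrow> E (q (inv q x)) (q (inv q y))"
    by (intro mem_vertex_stabilizerD(2)[OF q]) (simp_all add: permutes_in_image[OF permutes_inv[OF q_perm]])
  then show "E x y \<longleftrightarrow> E (inv q x) (inv q y)"
    by (simp add: permutes_inverses(1)[OF q_perm])
qed

lemma bij_betw_compose_right_vertex_stabilizer:
  assumes "q \<in> vertex_stabilizer V E i"
  shows "bij_betw (\<lambda>p. p \<circ> q) (vertex_stabilizer V E i) (vertex_stabilizer V E i)"
proof (rule bij_betw_byWitness[where f' = "\<lambda>p. p \<circ> inv q"])
  note q_perm = mem_vertex_stabilizerD(1)[OF assms]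
  show "\<forall>p\<in>vertex_stabilizer V E i. p \<circ> q \<circ> inv q = p"
    "\<forall>p\<in>vertex_stabilizer V E i. p \<circ> inv q \<circ> q = p"
    by (simp_all add: comp_assoc permutes_inv_o[OF q_perm])
  show "(\<lambda>p. p \<circ> q) ` vertex_stabilizer V E i \<subseteq> vertex_stabilizer V E i"
    using vertex_stabilizer_compose[OF _ assms] by blast
  show "(\<lambda>p. p \<circ> inv q) ` vertex_stabilizer V E i \<subseteq> vertex_stabilizer V E i"
    using vertex_stabilizer_compose[OF _ inv_in_vertex_stabilizer[OF assms]] by blast
qed

lemma orbit_rel_imp_vertex_stabilizer:
  assumes "orbit_rel V E i u v"
  obtains q where "q \<in> vertex_stabilizer V E i" "q u = v"
proof -
  obtain \<pi> where "graph_automorphism V E \<pi>" "\<pi> i = i" "\<pi> u = v" "u \<in> V"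
    using assms unfolding orbit_rel_def by blast
  then have \<pi>: "bij_betw \<pi> V V" "\<And>x y. x \<in> V \<Longrightarrow> y \<in> V \<Longrightarrow> E x y \<longleftrightarrow> E (\<pi> x) (\<pi> y)"
    unfolding graph_automorphism_def by blast+
  define q where "q x = (if x \<in> V then \<pi> x else x)" for x
  have "bij_betw q V V \<longleftrightarrow> bij_betw \<pi> V V"
    by (rule bij_betw_cong) (simp add: q_def)
  then have "q permutes V"
    using \<pi>(1) by (intro bij_imp_permutes) (simp_all add: q_def)
  then have "q \<in> vertex_stabilizer V E i"
    by (rule mem_vertex_stabilizerI) (simp_all add: q_def \<pi>(2) \<open>\<pi> i = i\<close>)
  moreover have "q u = v"
    using \<open>\<pi> u = v\<close> \<open>u \<in> V\<close> by (simp add: q_def)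
  ultimately show thesis ..
qed

section \<open>Lifting functions from the quotient graph\<close>

lemma mem_phi_self: "u \<in> V \<Longrightarrow> u \<in> phi V E i u"
  unfolding phi_def orbit_rel_def graph_automorphism_def by (auto intro!: exI[of _ id])

lemma mem_phi_imp_vertex_stabilizer:
  assumes "v \<in> phi V E i u"
  obtains q where "q \<in> vertex_stabilizer V E i" "q u = v"
proof (cases "u = i")
  case True
  then have "id u = v"
    using assms by (simp add: phi_def)
  with id_in_vertex_stabilizer show thesis
    by (rule that)
next
  case False
  then have "orbit_rel V E i u v"
    using assms by (simp add: phi_def)
  then show thesis
    by (rule orbit_rel_imp_vertex_stabilizer) (rule that)
qed

lemma vertex_stabilizer_invariant_factors_through_phi:
  assumes "\<And>q j. q \<in> vertex_stabilizer V E i \<Longrightarrow> j \<in> V \<Longrightarrow> s (q j) = s j"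
  shows "\<exists>g. \<forall>u\<in>V. g (phi V E i u) = s u"
proof (intro exI[of _ "\<lambda>x. s (SOME v. v \<in> x)"] ballI)
  fix u assume "u \<in> V"
  then have "(SOME v. v \<in> phi V E i u) \<in> phi V E i u"
    by (meson mem_phi_self someI)
  then obtain q where "q \<in> vertex_stabilizer V E i" "q u = (SOME v. v \<in> phi V E i u)"
    by (rule mem_phi_imp_vertex_stabilizer)
  with assms \<open>u \<in> V\<close> show "(\<lambda>x. s (SOME v. v \<in> x)) (phi V E i u) = s u"
    by metis
qed

lemma sum_phi_eq_weighted_sum:
  assumes "finite V"
  shows "(\<Sum>j\<in>V. F (phi V E i j)) = (\<Sum>x\<in>quot_vertices V E i. real (vweight V E i x) * F x)"
  unfolding quot_vertices_def vweight_def by (rule sum_comp_eq_sum_card_fibres[OF assms])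

lemma feasible_lift_iff:
  assumes "finite V"
  shows "feasible V i (\<lambda>j. g (phi V E i j)) \<longleftrightarrow> quot_feasible V E i g"
  by (simp add: feasible_def quot_feasible_def sum_phi_eq_weighted_sum[OF assms, of "\<lambda>x. (g x)\<^sup>2"])

text \<open>For \<open>x = y\<close> the weight \<open>eweight\<close> counts unordered edges, not arcs; this case never
  matters, since edges inside a class contribute nothing to either energy.\<close>

lemma card_arcs_between_classes:
  assumes "x \<noteq> y"
  shows "card {e \<in> arcs V E. map_prod (phi V E i) (phi V E i) e = (x, y)} = eweight V E i x y"
proof -
  let ?A = "{e \<in> arcs V E. map_prod (phi V E i) (phi V E i) e = (x, y)}"
  have inj: "inj_on (\<lambda>(a, b). {a, b}) ?A"
  proof (rule inj_onI)
    fix e e' assume "e \<in> ?A" "e' \<in> ?A" "(\<lambda>(a, b). {a, b}) e = (\<lambda>(a, b). {a, b}) e'"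
    moreover obtain a b c d where "e = (a, b)" "e' = (c, d)"
      by (cases e, cases e')
    ultimately show "e = e'"
      using assms by (auto simp: doubleton_eq_iff)
  qed
  have "(\<lambda>(a, b). {a, b}) ` ?A = {{a, b} | a b. a \<in> V \<and> b \<in> V \<and> E a b
       \<and> phi V E i a = x \<and> phi V E i b = y}" (is "_ = ?B")
  proof (intro equalityI subsetI)
    fix s assume "s \<in> (\<lambda>(a, b). {a, b}) ` ?A"
    then obtain a b where "s = {a, b}" "a \<in> V" "b \<in> V" "E a b" "phi V E i a = x" "phi V E i b = y"
      by (auto simp: arcs_def)
    then show "s \<in> ?B"
      by blast
  next
    fix s assume "s \<in> ?B"
    then obtain a b where "s = {a, b}" "a \<in> V" "b \<in> V" "E a b" "phi V E i a = x" "phi V E i b = y"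
      by blast
    then have "(a, b) \<in> ?A" "s = (\<lambda>(a, b). {a, b}) (a, b)"
      by (simp_all add: arcs_def)
    then show "s \<in> (\<lambda>(a, b). {a, b}) ` ?A"
      by (rule rev_image_eqI)
  qed
  with card_image[OF inj] show ?thesis
    unfolding eweight_def by simp
qed

lemma image_arcs_eq_quot_edges:
  assumes "finite V"
  shows "map_prod (phi V E i) (phi V E i) ` arcs V E = quot_edges V E i"
proof -
  have pos: "eweight V E i x y > 0 \<longleftrightarrow> (\<exists>a\<in>V. \<exists>b\<in>V. E a b \<and> phi V E i a = x \<and> phi V E i b = y)"
    for x y
  proof -
    let ?S = "{{a, b} | a b. a \<in> V \<and> b \<in> V \<and> E a b \<and> phi V E i a = x \<and> phi V E i b = y}"
    have "?S \<subseteq> Pow V"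
      by blast
    then have "finite ?S"
      using assms by (rule finite_subset[OF _ finite_Pow_iff[THEN iffD2]])
    then have "eweight V E i x y > 0 \<longleftrightarrow> ?S \<noteq> {}"
      by (simp add: eweight_def card_gt_0_iff)
    also have "\<dots> \<longleftrightarrow> (\<exists>a\<in>V. \<exists>b\<in>V. E a b \<and> phi V E i a = x \<and> phi V E i b = y)"
      by blast
    finally show ?thesis .
  qed
  show ?thesis
  proof (intro equalityI subsetI)
    fix e assume "e \<in> map_prod (phi V E i) (phi V E i) ` arcs V E"
    then show "e \<in> quot_edges V E i"
      using pos by (auto simp: arcs_def quot_edges_def quot_vertices_def)
  next
    fix e assume "e \<in> quot_edges V E i"
    then obtain x y where "e = (x, y)" "eweight V E i x y > 0"
      by (auto simp: quot_edges_def)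
    then obtain a b where "a \<in> V" "b \<in> V" "E a b" "e = map_prod (phi V E i) (phi V E i) (a, b)"
      using pos by auto
    then show "e \<in> map_prod (phi V E i) (phi V E i) ` arcs V E"
      by (auto simp: arcs_def)
  qed
qed

lemma energy_lift:
  assumes "finite V"
  shows "energy V E (\<lambda>j. g (phi V E i j)) = quot_energy V E i g"
proof -
  let ?\<Phi> = "map_prod (phi V E i) (phi V E i)"
  let ?F = "\<lambda>(x, y). (g x - g y)\<^sup>2"
  have "(\<Sum>(j, k)\<in>arcs V E. (g (phi V E i k) - g (phi V E i j))\<^sup>2) = (\<Sum>e\<in>arcs V E. ?F (?\<Phi> e))"
    by (intro sum.cong) (auto simp: power2_commute)
  also have "\<dots> = (\<Sum>y\<in>?\<Phi> ` arcs V E. real (card {e \<in> arcs V E. ?\<Phi> e = y}) * ?F y)"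
    by (rule sum_comp_eq_sum_card_fibres[OF finite_arcs[OF assms]])
  also have "\<dots> = (\<Sum>(x, y)\<in>quot_edges V E i. real (eweight V E i x y) * (g x - g y)\<^sup>2)"
    unfolding image_arcs_eq_quot_edges[OF assms]
  proof (rule sum.cong[OF refl])
    fix e :: "'a set \<times> 'a set"
    obtain x y where "e = (x, y)"
      by (cases e)
    then show "real (card {e' \<in> arcs V E. ?\<Phi> e' = e}) * ?F e
        = (case e of (x, y) \<Rightarrow> real (eweight V E i x y) * (g x - g y)\<^sup>2)"
      by (cases "x = y") (simp_all add: card_arcs_between_classes)
  qed
  finally show ?thesis
    by (simp add: energy_eq_sum_arcs quot_energy_def)
qed

lemma quot_solution_lift_le_invariant:
  assumes "finite V" "i \<in> V" "quot_solution V E i fhat" "feasible V i s"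
    and "\<And>q j. q \<in> vertex_stabilizer V E i \<Longrightarrow> j \<in> V \<Longrightarrow> s (q j) = s j"
  shows "energy V E (\<lambda>j. fhat (phi V E i j)) \<le> energy V E s"
proof -
  have "\<exists>g. \<forall>u\<in>V. g (phi V E i u) = s u"
    using assms(5) by (rule vertex_stabilizer_invariant_factors_through_phi)
  then obtain g where g: "\<And>u. u \<in> V \<Longrightarrow> g (phi V E i u) = s u"
    by blast
  have "feasible V i (\<lambda>j. g (phi V E i j)) \<longleftrightarrow> feasible V i s"
    by (rule feasible_cong[OF assms(2)]) (rule g)
  then have "quot_feasible V E i g"
    using assms(4) feasible_lift_iff[OF assms(1)] by blast
  have "energy V E (\<lambda>j. fhat (phi V E i j)) = quot_energy V E i fhat"
    by (rule energy_lift[OF assms(1)])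
  also have "\<dots> \<le> quot_energy V E i g"
    using assms(3) \<open>quot_feasible V E i g\<close> by (simp add: quot_solution_def)
  also have "\<dots> = energy V E (\<lambda>j. g (phi V E i j))"
    by (rule energy_lift[OF assms(1), symmetric])
  also have "\<dots> = energy V E s"
    by (rule energy_cong) (rule g)
  finally show ?thesis .
qed

theorem theorem4:
  fixes V :: "'a set" and E :: "'a \<Rightarrow> 'a \<Rightarrow> bool" and i :: 'a
    and fhat :: "'a set \<Rightarrow> real"
  assumes "simple_graph V E"
    and "connected_graph V E"
    and "i \<in> V"
    and "\<forall>u v. orbit_rel V E i u v \<longrightarrow> \<not> E u v"
    and "quot_solution V E i fhat"
  shows "solution V E i (\<lambda>j. fhat (phi V E i j))"
proof -
  let ?\<Gamma> = "vertex_stabilizer V E i"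
  have V: "finite V"
    using assms(1) by (simp add: simple_graph_def)
  have \<Gamma>: "finite ?\<Gamma>" "?\<Gamma> \<noteq> {}"
    using finite_vertex_stabilizer[OF V] id_in_vertex_stabilizer[of V E i] by auto
  have "energy V E (\<lambda>j. fhat (phi V E i j)) \<le> energy V E h" if h: "feasible V i h" for h
  proof -
    have "(\<Sum>j\<in>V. (orbit_rms ?\<Gamma> h j)\<^sup>2) = (\<Sum>j\<in>V. (h j)\<^sup>2)"
      by (rule sum_sq_orbit_rms[OF \<Gamma> permutes_imp_bij[OF mem_vertex_stabilizerD(1)]])
    moreover have "orbit_rms ?\<Gamma> h i = \<bar>h i\<bar>"
      by (rule orbit_rms_fixpoint[OF \<Gamma> mem_vertex_stabilizerD(3)])
    ultimately have rms_feasible: "feasible V i (orbit_rms ?\<Gamma> h)"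
      using h by (simp add: feasible_def)
    have "energy V E (\<lambda>j. fhat (phi V E i j)) \<le> energy V E (orbit_rms ?\<Gamma> h)"
    proof (rule quot_solution_lift_le_invariant[OF V assms(3,5) rms_feasible])
      fix q j assume "q \<in> ?\<Gamma>"
      then show "orbit_rms ?\<Gamma> h (q j) = orbit_rms ?\<Gamma> h j"
        by (intro orbit_rms_compose_right bij_betw_compose_right_vertex_stabilizer)
    qed
    also have "\<dots> \<le> energy V E h"
      by (rule energy_orbit_rms_le[OF V \<Gamma> vertex_stabilizer_automorphism])
    finally show ?thesis .
  qed
  moreover have "feasible V i (\<lambda>j. fhat (phi V E i j))"
    using assms(5) feasible_lift_iff[OF V] by (simp add: quot_solution_def)
  ultimately show ?thesis
    by (simp add: solution_def)
qed

end
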